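(* Let $\Lambda>0$, let $a_\Lambda\in\mathbb R$, and let $\rho\in C_c^\infty(\mathbb R^3)$ be real-valued and identically equal to $1$ on some ball $B(0,R)$, $R>0$. For $c>0$ let $\nu_{c,\rho,\Lambda}$ be the probability measure $$\nu_{c,\rho,\Lambda}(d\Phi)=\frac1{Z}\,e^{-c\|\rho\Phi_\Lambda\|^4_{L^4(\mathbb R^3)}-c\,a_\Lambda\|\rho\Phi_\Lambda\|^2_{L^2(\mathbb R^3)}}\,\mu_{\mathrm{GFF}}(d\Phi),\qquad \Phi_\Lambda=\Pi_\Lambda\Phi,$$ with $Z$ the normalizing constant. Then for $c>0$ small enough (depending on $\Lambda$, $\rho$, $a_\Lambda$) there exists $f\in L^2(\mathbb R^3)$ with $\mathrm{supp}(f)\subset\{x_1>0\}$ such that $$\mathbb E_{\nu_{c,\rho,\Lambda}}\Big[\overline{(\rho\Pi_\Lambda\Phi)(\Theta f)}\,(\rho\Pi_\Lambda\Phi)(f)\Big]<0.$$ Consequently, for such $c$ the measure $\nu_{c,\rho,\Lambda}$ is not reflection positive.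
   Context: $\mu_{\mathrm{GFF}}$ is the law of the massive Gaussian free field on $\mathbb R^3$, the centered Gaussian random distribution with covariance $\mathbb E[\Phi(f)\Phi(h)]=\langle f,(\Delta+1)^{-1}h\rangle_{L^2}$, $\Delta$ the positive Laplacian. $\Pi_\Lambda=\mathbbm 1_{[0,\Lambda^2]}(\Delta)$ is the Fourier multiplier by $\mathbbm 1_{\{|\xi|\le\Lambda\}}$, so $\Phi_\Lambda$ is a random smooth function. For $f\in L^2(\mathbb R^3)$, $(\rho\Pi_\Lambda\Phi)(f)=\int_{\mathbb R^3}f(x)\rho(x)(\Pi_\Lambda\Phi)(x)\,dx$. $\Theta(x_1,x_2,x_3)=(-x_1,x_2,x_3)$ and $\Theta f=f\circ\Theta$. Reflection positivity of the measure refers to the field $\rho\Pi_\Lambda\Phi$ under $\nu_{c,\rho,\Lambda}$: for observables $F$ depending on this field tested against functions supported in $\{x_1\ge 0\}$, $\mathbb E[\overline{\Theta F}F]\ge 0$, where $(\Theta F)(\omega)=F(\omega\circ\Theta)$. *)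

theory Defs
  imports "HOL-Analysis.Analysis" "HOL-Probability.Probability"
begin

type_synonym pt = "real^3"

fun pderivs :: "3 list \<Rightarrow> (pt \<Rightarrow> real) \<Rightarrow> pt \<Rightarrow> real" where
  "pderivs [] f = f"
| "pderivs (i # is) f = (\<lambda>x. frechet_derivative (pderivs is f) (at x) (axis i 1))"

definition smooth_fun :: "(pt \<Rightarrow> real) \<Rightarrow> bool" where
  "smooth_fun f \<longleftrightarrow> (\<forall>is. \<forall>x. pderivs is f differentiable (at x))"

definition compact_support :: "(pt \<Rightarrow> real) \<Rightarrow> bool" where
  "compact_support f \<longleftrightarrow> compact (closure {x. f x \<noteq> 0})"

definition Theta :: "pt \<Rightarrow> pt" where
  "Theta x = (\<chi> i. if i = 1 then - (x $ i) else x $ i)"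

text \<open>Covariance kernel of Pi_Lambda Phi, Phi the massive GFF on R^3:
  C(x,y) = (2 pi)^(-3) int_{|xi| <= Lambda} e^{i xi.(x-y)} / (|xi|^2 + 1) d xi.\<close>
definition cov_kernel :: "real \<Rightarrow> pt \<Rightarrow> pt \<Rightarrow> real" where
  "cov_kernel \<Lambda> x y = (1 / (2 * pi) ^ 3) *
     (LINT \<xi>|lborel. indicator (cball 0 \<Lambda>) \<xi> * cos (\<xi> \<bullet> (x - y)) / ((norm \<xi>)\<^sup>2 + 1))"

text \<open>phi is a realization of the centered Gaussian random field with covariance C
  on the probability space M (characteristic functions of all finite linear
  combinations), with continuous sample paths, jointly measurable.\<close>
definition gaussian_field :: "'w measure \<Rightarrow> ('w \<Rightarrow> pt \<Rightarrow> real) \<Rightarrow> (pt \<Rightarrow> pt \<Rightarrow> real) \<Rightarrow> bool" where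
  "gaussian_field M \<phi> C \<longleftrightarrow>
     prob_space M \<and>
     (\<lambda>(\<omega>, x). \<phi> \<omega> x) \<in> borel_measurable (M \<Otimes>\<^sub>M lborel) \<and>
     (\<forall>\<omega>\<in>space M. continuous_on UNIV (\<phi> \<omega>)) \<and>
     (\<forall>xs :: pt list. \<forall>as :: real list. length as = length xs \<longrightarrow>
        (LINT \<omega>|M. cis (\<Sum>i<length xs. as ! i * \<phi> \<omega> (xs ! i))) =
        complex_of_real (exp (- (1/2) * (\<Sum>i<length xs. \<Sum>j<length xs.
              as ! i * as ! j * C (xs ! i) (xs ! j)))))"

definition weight :: "real \<Rightarrow> real \<Rightarrow> (pt \<Rightarrow> real) \<Rightarrow> ('w \<Rightarrow> pt \<Rightarrow> real) \<Rightarrow> 'w \<Rightarrow> real" where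
  "weight c a \<rho> \<phi> \<omega> = exp (- c * (LINT x|lborel. (\<rho> x * \<phi> \<omega> x) ^ 4)
                              - c * a * (LINT x|lborel. (\<rho> x * \<phi> \<omega> x) ^ 2))"

definition nu :: "'w measure \<Rightarrow> real \<Rightarrow> real \<Rightarrow> (pt \<Rightarrow> real) \<Rightarrow> ('w \<Rightarrow> pt \<Rightarrow> real) \<Rightarrow> 'w measure" where
  "nu M c a \<rho> \<phi> = density M (\<lambda>\<omega>. ennreal (weight c a \<rho> \<phi> \<omega> /
                        (LINT \<omega>'|M. weight c a \<rho> \<phi> \<omega>')))"

text \<open>The smeared field (rho Pi_Lambda Phi)(f) = int f rho Phi_Lambda.\<close>
definition smeared :: "(pt \<Rightarrow> real) \<Rightarrow> ('w \<Rightarrow> pt \<Rightarrow> real) \<Rightarrow> (pt \<Rightarrow> complex) \<Rightarrow> 'w \<Rightarrow> complex" where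
  "smeared \<rho> \<phi> f \<omega> = (LINT x|lborel. f x * complex_of_real (\<rho> x * \<phi> \<omega> x))"

definition square_integrable :: "(pt \<Rightarrow> complex) \<Rightarrow> bool" where
  "square_integrable f \<longleftrightarrow> f \<in> borel_measurable lborel \<and> integrable lborel (\<lambda>x. (cmod (f x))\<^sup>2)"

end

(*
  Correlations of the field smeared against the dipole f = 1_B(2s e1, s) - 1_B(4s e1, s) and its
  reflection are, under the Gaussian measure and since rho = 1 near the supports, an integral over
  pairs of points of the second difference C(w - 4s e1) - 2 C(w - 6s e1) + C(w - 8s e1) of the
  covariance with |w| < 2s. In Fourier space this is the integral over |xi| <= Lambda of
  2 cos(xi.w - 6s xi1) (cos(2s xi1) - 1) / (|xi|^2 + 1), which is negative once s Lambda is small,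
  because then the first cosine is positive. The interaction weight is positive, bounded by
  exp(c a^2 |supp rho| / 4) by completing the square, and tends to 1 as c -> 0, so by dominated
  convergence the correlation under nu stays negative for small c.
*)

theory Submission
  imports Defs
begin

lemma sets_borel_ball [measurable]: "ball x r \<in> sets borel"
  by simp

lemma sets_borel_cball [measurable]: "cball x r \<in> sets borel"
  by simp

lemma integral_neg_of_neg_on_nonnull:
  fixes f :: "'a \<Rightarrow> real"
  assumes f: "integrable M f" and nonpos: "\<And>x. x \<in> space M \<Longrightarrow> f x \<le> 0"
    and A: "A \<in> sets M" "emeasure M A \<noteq> 0" and neg: "\<And>x. x \<in> A \<Longrightarrow> f x < 0"
  shows "integral\<^sup>L M f < 0"
proof -
  have nonneg: "AE x in M. 0 \<le> - f x" using nonpos by (intro AE_I2) simp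
  have "integral\<^sup>L M (\<lambda>x. - f x) \<noteq> 0"
  proof
    assume "integral\<^sup>L M (\<lambda>x. - f x) = 0"
    then have "AE x in M. - f x = 0"
      using integral_nonneg_eq_0_iff_AE[OF integrable_minus[OF f] nonneg] by blast
    then have "AE x in M. x \<notin> A" by eventually_elim (use neg in force)
    moreover have "{x \<in> space M. \<not> x \<notin> A} = A" using sets.sets_into_space[OF A(1)] by auto
    ultimately show False using A AE_iff_measurable[OF A(1)] by simp
  qed
  moreover have "integral\<^sup>L M (\<lambda>x. - f x) \<ge> 0" using nonneg by (rule integral_nonneg_AE)
  ultimately show ?thesis by simp
qed

lemma emeasure_lborel_ball_nonzero:
  "r > 0 \<Longrightarrow> emeasure lborel (ball (c :: 'a :: euclidean_space) r) \<noteq> 0"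
  using content_ball_pos[of r c] emeasure_lborel_ball_finite[of c r]
  by (simp add: emeasure_eq_ennreal_measure)

lemma integrable_indicator_ball_times_continuous:
  fixes g :: "'a :: euclidean_space \<Rightarrow> real"
  assumes "continuous_on UNIV g"
  shows "integrable lborel (\<lambda>x. indicator (ball p r) x * g x)"
proof -
  have "integrable lborel (\<lambda>x. indicator (cball p r) x *\<^sub>R g x)"
    by (rule borel_integrable_compact) (auto intro: continuous_on_subset[OF assms])
  then have "integrable lborel (\<lambda>x. indicator (ball p r) x *\<^sub>R (indicator (cball p r) x *\<^sub>R g x))"
    by (rule integrable_mult_indicator[rotated]) simp
  moreover have "(\<lambda>x. indicator (ball p r) x *\<^sub>R (indicator (cball p r) x *\<^sub>R g x)) =
      (\<lambda>x. indicator (ball p r) x * g x)"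
    by (auto simp: indicator_def)
  ultimately show ?thesis by simp
qed

lemma integral_normalized_density:
  fixes h :: "'a \<Rightarrow> 'b :: {banach, second_countable_topology}"
  assumes [measurable]: "W \<in> borel_measurable M" "h \<in> borel_measurable M"
    and W_nonneg: "\<And>\<omega>. \<omega> \<in> space M \<Longrightarrow> 0 \<le> W \<omega>"
  shows "(LINT \<omega>|density M (\<lambda>\<omega>. ennreal (W \<omega> / (LINT \<omega>'|M. W \<omega>'))). h \<omega>)
    = (LINT \<omega>|M. W \<omega> *\<^sub>R h \<omega>) /\<^sub>R (LINT \<omega>|M. W \<omega>)"
proof -
  have "0 \<le> (LINT \<omega>|M. W \<omega>)" using W_nonneg by simp
  then have "(LINT \<omega>|density M (\<lambda>\<omega>. ennreal (W \<omega> / (LINT \<omega>'|M. W \<omega>'))). h \<omega>)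
      = (LINT \<omega>|M. (W \<omega> / (LINT \<omega>'|M. W \<omega>')) *\<^sub>R h \<omega>)"
    using W_nonneg by (intro integral_density) auto
  then show ?thesis
    using integral_scaleR_right[of M "inverse (LINT \<omega>|M. W \<omega>)" "\<lambda>\<omega>. W \<omega> *\<^sub>R h \<omega>"]
    by (simp add: divide_inverse_commute)
qed

lemma tendsto_integral_weighted_at_right_0:
  fixes X :: "'a \<Rightarrow> real" and W :: "real \<Rightarrow> 'a \<Rightarrow> real"
  assumes X: "integrable M X" and W: "\<And>c. W c \<in> borel_measurable M"
    and bound: "\<And>c \<omega>. 0 < c \<Longrightarrow> c \<le> 1 \<Longrightarrow> \<omega> \<in> space M \<Longrightarrow> \<bar>W c \<omega>\<bar> \<le> K"
    and lim: "\<And>\<omega>. \<omega> \<in> space M \<Longrightarrow> ((\<lambda>c. W c \<omega>) \<longlongrightarrow> 1) (at_right 0)"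
  shows "((\<lambda>c. LINT \<omega>|M. W c \<omega> * X \<omega>) \<longlongrightarrow> integral\<^sup>L M X) (at_right 0)"
  unfolding filterlim_at_right_to_top
proof (rule integral_dominated_convergence_at_top[where w = "\<lambda>\<omega>. K * \<bar>X \<omega>\<bar>"])
  show "X \<in> borel_measurable M" using X by measurable
  show "(\<lambda>\<omega>. W (inverse t) \<omega> * X \<omega>) \<in> borel_measurable M" for t
    using W X by measurable
  show "integrable M (\<lambda>\<omega>. K * \<bar>X \<omega>\<bar>)" using X by auto
  show "AE \<omega> in M. ((\<lambda>t. W (inverse t) \<omega> * X \<omega>) \<longlongrightarrow> X \<omega>) at_top"
    using lim[unfolded filterlim_at_right_to_top] by (auto intro!: AE_I2 tendsto_eq_intros)
  show "\<forall>\<^sub>F t in at_top. AE \<omega> in M. norm (W (inverse t) \<omega> * X \<omega>) \<le> K * \<bar>X \<omega>\<bar>"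
    using eventually_ge_at_top[of 1]
  proof eventually_elim
    case (elim t)
    then show ?case
      using bound[of "inverse t"] by (auto intro!: AE_I2 mult_right_mono simp: abs_mult inverse_le_1_iff)
  qed
qed

lemma gaussian_char_second_moment:
  assumes "prob_space M" and Y[measurable]: "Y \<in> borel_measurable M"
    and char_Y: "\<And>t. (LINT \<omega>|M. cis (t * Y \<omega>)) = complex_of_real (exp (- (t\<^sup>2 * V) / 2))"
  shows "integrable M (\<lambda>\<omega>. (Y \<omega>)\<^sup>2)" "(LINT \<omega>|M. (Y \<omega>)\<^sup>2) = V"
proof -
  interpret P: prob_space M by fact
  interpret SN: prob_space std_normal_distribution
    using real_dist_normal_dist real_distribution_def by blast
  have V: "V \<ge> 0"
  proof -
    have "norm (LINT \<omega>|M. cis (1 * Y \<omega>)) \<le> (LINT \<omega>|M. norm (cis (1 * Y \<omega>)))"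
      by (rule integral_norm_bound)
    then have "exp (- V / 2) \<le> 1" using char_Y[of 1] by (simp add: P.prob_space)
    then show ?thesis by simp
  qed
  define N where "N = distr std_normal_distribution borel ((*) (sqrt V))"
  have "char (distr M borel Y) = char N"
  proof
    fix t
    have "char (distr M borel Y) t = (LINT \<omega>|M. cis (t * Y \<omega>))"
      unfolding char_def by (subst integral_distr) (auto simp: cis_conv_exp)
    also have "\<dots> = char std_normal_distribution (t * sqrt V)"
      unfolding char_Y char_std_normal_distribution using V by (simp add: power_mult_distrib)
    also have "\<dots> = char N t"
      unfolding char_def N_def by (subst integral_distr) (auto simp: mult_ac)
    finally show "char (distr M borel Y) t = char N t" .
  qed
  moreover have "real_distribution N"
    unfolding N_def by (rule SN.real_distribution_distr) simp
  ultimately have law: "distr M borel Y = N"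
    using Levy_uniqueness P.real_distribution_distr[OF Y] by blast
  have "integrable N (\<lambda>z. z\<^sup>2)"
    unfolding N_def using std_normal_distribution_even_moments(2)[of 1]
    by (subst integrable_distr_eq) (auto simp: power_mult_distrib)
  then show "integrable M (\<lambda>\<omega>. (Y \<omega>)\<^sup>2)"
    using law by (subst integrable_distr_eq[symmetric, of Y M borel]) auto
  have "(LINT z|N. z\<^sup>2) = V"
    unfolding N_def using std_normal_distribution_even_moments(1)[of 1] V
    by (subst integral_distr) (auto simp: power_mult_distrib)
  then show "(LINT \<omega>|M. (Y \<omega>)\<^sup>2) = V"
    using law by (subst integral_distr[symmetric, of Y M borel]) auto
qed

section \<open>Gaussian fields\<close>

lemma gaussian_field_prob_space: "gaussian_field M \<phi> C \<Longrightarrow> prob_space M"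
  unfolding gaussian_field_def by blast

lemma gaussian_field_continuous:
  "gaussian_field M \<phi> C \<Longrightarrow> \<omega> \<in> space M \<Longrightarrow> continuous_on UNIV (\<phi> \<omega>)"
  unfolding gaussian_field_def by blast

lemma gaussian_field_measurable_comp:
  assumes "gaussian_field M \<phi> C" "f \<in> measurable N M" "g \<in> borel_measurable N"
  shows "(\<lambda>z. \<phi> (f z) (g z)) \<in> borel_measurable N"
proof -
  have "(\<lambda>(\<omega>, x). \<phi> \<omega> x) \<in> borel_measurable (M \<Otimes>\<^sub>M lborel)"
    using assms(1) unfolding gaussian_field_def by blast
  moreover have "(\<lambda>z. (f z, g z)) \<in> measurable N (M \<Otimes>\<^sub>M lborel)"
    using assms(2,3) by (intro measurable_Pair) auto
  ultimately show ?thesis using measurable_compose by fastforce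
qed

lemma gaussian_field_measurable_at:
  "gaussian_field M \<phi> C \<Longrightarrow> (\<lambda>\<omega>. \<phi> \<omega> x) \<in> borel_measurable M"
  by (rule gaussian_field_measurable_comp) auto

lemma gaussian_field_second_moment:
  assumes gf: "gaussian_field M \<phi> C" and len: "length as = length xs"
  defines "Y \<equiv> \<lambda>\<omega>. \<Sum>i<length xs. as ! i * \<phi> \<omega> (xs ! i)"
  defines "V \<equiv> \<Sum>i<length xs. \<Sum>j<length xs. as ! i * as ! j * C (xs ! i) (xs ! j)"
  shows "integrable M (\<lambda>\<omega>. (Y \<omega>)\<^sup>2)" "(LINT \<omega>|M. (Y \<omega>)\<^sup>2) = V"
proof -
  have char_field: "\<And>as. length as = length xs \<Longrightarrow>
      (LINT \<omega>|M. cis (\<Sum>i<length xs. as ! i * \<phi> \<omega> (xs ! i))) =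
      complex_of_real (exp (- (1/2) * (\<Sum>i<length xs. \<Sum>j<length xs. as ! i * as ! j * C (xs ! i) (xs ! j))))"
    using gf unfolding gaussian_field_def by blast
  have char: "(LINT \<omega>|M. cis (t * Y \<omega>)) = complex_of_real (exp (- (t\<^sup>2 * V) / 2))" for t
  proof -
    have "(LINT \<omega>|M. cis (t * Y \<omega>)) =
        (LINT \<omega>|M. cis (\<Sum>i<length xs. map ((*) t) as ! i * \<phi> \<omega> (xs ! i)))"
      unfolding Y_def by (simp add: sum_distrib_left len mult.assoc)
    also have "\<dots> = complex_of_real (exp (- (1/2) * (\<Sum>i<length xs. \<Sum>j<length xs.
              map ((*) t) as ! i * map ((*) t) as ! j * C (xs ! i) (xs ! j))))"
      by (rule char_field) (simp add: len)
    also have "(\<Sum>i<length xs. \<Sum>j<length xs.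
              map ((*) t) as ! i * map ((*) t) as ! j * C (xs ! i) (xs ! j)) = t\<^sup>2 * V"
      unfolding V_def by (simp add: len sum_distrib_left power2_eq_square mult_ac)
    finally show ?thesis by simp
  qed
  have "Y \<in> borel_measurable M"
    unfolding Y_def using gaussian_field_measurable_at[OF gf] by measurable
  then show "integrable M (\<lambda>\<omega>. (Y \<omega>)\<^sup>2)" "(LINT \<omega>|M. (Y \<omega>)\<^sup>2) = V"
    using gaussian_char_second_moment[OF gaussian_field_prob_space[OF gf] _ char] by auto
qed

lemma gaussian_field_covariance:
  assumes gf: "gaussian_field M \<phi> C" and sym: "C y x = C x y"
  shows "integrable M (\<lambda>\<omega>. (\<phi> \<omega> x)\<^sup>2)" "(LINT \<omega>|M. (\<phi> \<omega> x)\<^sup>2) = C x x"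
    "integrable M (\<lambda>\<omega>. \<phi> \<omega> x * \<phi> \<omega> y)" "(LINT \<omega>|M. \<phi> \<omega> x * \<phi> \<omega> y) = C x y"
proof -
  have sq: "integrable M (\<lambda>\<omega>. (\<phi> \<omega> z)\<^sup>2)" "(LINT \<omega>|M. (\<phi> \<omega> z)\<^sup>2) = C z z" for z
    using gaussian_field_second_moment[OF gf, of "[1]" "[z]"] by simp_all
  have sum: "integrable M (\<lambda>\<omega>. (\<phi> \<omega> x + \<phi> \<omega> y)\<^sup>2)"
    "(LINT \<omega>|M. (\<phi> \<omega> x + \<phi> \<omega> y)\<^sup>2) = C x x + C x y + (C y x + C y y)"
    using gaussian_field_second_moment[OF gf, of "[1,1]" "[x,y]"] by (simp_all add: numeral_2_eq_2)
  show "integrable M (\<lambda>\<omega>. (\<phi> \<omega> x)\<^sup>2)" "(LINT \<omega>|M. (\<phi> \<omega> x)\<^sup>2) = C x x" by (fact sq)+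
  have polar: "(\<lambda>\<omega>. \<phi> \<omega> x * \<phi> \<omega> y) =
      (\<lambda>\<omega>. ((\<phi> \<omega> x + \<phi> \<omega> y)\<^sup>2 - (\<phi> \<omega> x)\<^sup>2 - (\<phi> \<omega> y)\<^sup>2) / 2)"
    by (auto simp: power2_eq_square algebra_simps)
  show "integrable M (\<lambda>\<omega>. \<phi> \<omega> x * \<phi> \<omega> y)"
    unfolding polar using sq sum by auto
  show "(LINT \<omega>|M. \<phi> \<omega> x * \<phi> \<omega> y) = C x y"
    unfolding polar using sq sum sym by simp
qed

lemma gaussian_field_abs_product_bound:
  assumes gf: "gaussian_field M \<phi> C" and sym: "C y x = C x y"
  shows "(\<integral>\<^sup>+\<omega>. ennreal (norm (\<phi> \<omega> x * \<phi> \<omega> y)) \<partial>M) \<le> ennreal ((C x x + C y y) / 2)"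
proof -
  note cov = gaussian_field_covariance[OF gf sym] gaussian_field_covariance[OF gf refl, of y]
  have int: "integrable M (\<lambda>\<omega>. norm (\<phi> \<omega> x * \<phi> \<omega> y))" using cov(3) by auto
  have "(LINT \<omega>|M. norm (\<phi> \<omega> x * \<phi> \<omega> y)) \<le> (LINT \<omega>|M. ((\<phi> \<omega> x)\<^sup>2 + (\<phi> \<omega> y)\<^sup>2) / 2)"
  proof (rule integral_mono[OF int])
    show "integrable M (\<lambda>\<omega>. ((\<phi> \<omega> x)\<^sup>2 + (\<phi> \<omega> y)\<^sup>2) / 2)" using cov by auto
    fix \<omega>
    have "0 \<le> (\<bar>\<phi> \<omega> x\<bar> - \<bar>\<phi> \<omega> y\<bar>)\<^sup>2" by simp
    then show "norm (\<phi> \<omega> x * \<phi> \<omega> y) \<le> ((\<phi> \<omega> x)\<^sup>2 + (\<phi> \<omega> y)\<^sup>2) / 2"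
      by (simp add: power2_eq_square algebra_simps abs_mult)
  qed
  also have "\<dots> = (C x x + C y y) / 2" using cov by simp
  finally show ?thesis
    using nn_integral_eq_integral[OF int] by (simp add: ennreal_leI)
qed

definition ball_integral :: "real \<Rightarrow> (pt \<Rightarrow> real) \<Rightarrow> pt \<Rightarrow> real" where
  "ball_integral s g p = (LINT u|lborel. indicator (ball 0 s) u * g (p + u))"

lemma gaussian_field_ball_integral_measurable:
  assumes gf: "gaussian_field M \<phi> C"
  shows "(\<lambda>\<omega>. ball_integral s (\<phi> \<omega>) r) \<in> borel_measurable M"
proof -
  have [measurable]: "(\<lambda>w. \<phi> (fst w) (r + snd w)) \<in> borel_measurable (M \<Otimes>\<^sub>M borel)"
    by (rule gaussian_field_measurable_comp[OF gf]) auto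
  have "(\<lambda>(\<omega>, u). indicator (ball 0 s) u * \<phi> \<omega> (r + u)) \<in> borel_measurable (M \<Otimes>\<^sub>M borel)"
    unfolding split_beta' by measurable
  then have "(\<lambda>(\<omega>, u). indicator (ball 0 s) u * \<phi> \<omega> (r + u)) \<in> borel_measurable (M \<Otimes>\<^sub>M lborel)"
    by (subst measurable_cong_sets[OF sets_pair_measure_cong refl]) auto
  then show ?thesis
    unfolding ball_integral_def by (rule lborel.borel_measurable_lebesgue_integral)
qed

lemma gaussian_field_ball_product_integrable:
  fixes p q :: pt and s :: real
  assumes gf: "gaussian_field M \<phi> C" and sym: "\<And>x y. C y x = C x y" and diag: "\<And>x. C x x = K"
  shows "integrable (M \<Otimes>\<^sub>M (lborel \<Otimes>\<^sub>M lborel))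
    (\<lambda>(\<omega>, z). indicator (ball 0 s) (fst z) * \<phi> \<omega> (q + fst z) * (indicator (ball 0 s) (snd z) * \<phi> \<omega> (p + snd z)))"
    (is "integrable ?M2 (case_prod ?G)")
proof -
  interpret P: prob_space M using gaussian_field_prob_space[OF gf] .
  interpret PS: pair_sigma_finite M "lborel \<Otimes>\<^sub>M lborel :: (pt \<times> pt) measure"
    by (intro pair_sigma_finite.intro P.sigma_finite_measure) (simp add: lborel_prod sigma_finite_lborel)
  define B where "B = ball (0::pt) s"
  have [measurable]: "(\<lambda>w. \<phi> (fst w) (q + fst (snd w))) \<in> borel_measurable (M \<Otimes>\<^sub>M borel \<Otimes>\<^sub>M borel)"
    "(\<lambda>w. \<phi> (fst w) (p + snd (snd w))) \<in> borel_measurable (M \<Otimes>\<^sub>M borel \<Otimes>\<^sub>M borel)"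
    by (rule gaussian_field_measurable_comp[OF gf]; simp)+
  have "case_prod ?G \<in> borel_measurable (M \<Otimes>\<^sub>M borel \<Otimes>\<^sub>M borel)"
    unfolding split_beta' by measurable
  then have Gm: "case_prod ?G \<in> borel_measurable ?M2"
    by (subst measurable_cong_sets[OF sets_pair_measure_cong refl]) auto
  have "(\<integral>\<^sup>+w. ennreal (norm (case_prod ?G w)) \<partial>?M2) = (\<integral>\<^sup>+z. (\<integral>\<^sup>+\<omega>. ennreal (norm (?G \<omega> z)) \<partial>M) \<partial>(lborel \<Otimes>\<^sub>M lborel))"
    using PS.nn_integral_snd[of "\<lambda>w. ennreal (norm (case_prod ?G w))"] Gm by simp
  also have "\<dots> \<le> (\<integral>\<^sup>+z. ennreal K * indicator (B \<times> B) z \<partial>(lborel \<Otimes>\<^sub>M lborel))"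
  proof (rule nn_integral_mono)
    fix z :: "pt \<times> pt"
    show "(\<integral>\<^sup>+\<omega>. ennreal (norm (?G \<omega> z)) \<partial>M) \<le> ennreal K * indicator (B \<times> B) z"
    proof (cases "z \<in> B \<times> B")
      case True
      then show ?thesis
        using gaussian_field_abs_product_bound[OF gf sym, of "q + fst z" "p + snd z"]
        by (auto simp: B_def indicator_def mem_Times_iff diag)
    qed (auto simp: B_def indicator_def mem_Times_iff)
  qed
  also have "\<dots> = ennreal K * (emeasure lborel B * emeasure lborel B)"
    by (subst nn_integral_cmult_indicator) (auto simp: B_def lborel.emeasure_pair_measure_Times)
  also have "\<dots> < \<infinity>"
    using emeasure_lborel_ball_finite[of "0::pt" s]
    by (simp add: B_def ennreal_mult_less_top top.not_eq_extremum)
  finally show ?thesis using Gm by (simp add: integrable_iff_bounded)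
qed

lemma gaussian_field_ball_integral_product:
  fixes p q :: pt and s :: real
  assumes gf: "gaussian_field M \<phi> C" and sym: "\<And>x y. C y x = C x y" and diag: "\<And>x. C x x = K"
  defines "H \<equiv> \<lambda>z :: pt \<times> pt. indicator (ball 0 s) (fst z) * indicator (ball 0 s) (snd z) * C (q + fst z) (p + snd z)"
  shows "integrable M (\<lambda>\<omega>. ball_integral s (\<phi> \<omega>) q * ball_integral s (\<phi> \<omega>) p)"
    "integrable (lborel \<Otimes>\<^sub>M lborel) H"
    "(LINT \<omega>|M. ball_integral s (\<phi> \<omega>) q * ball_integral s (\<phi> \<omega>) p) = integral\<^sup>L (lborel \<Otimes>\<^sub>M lborel) H"
proof -
  interpret P: prob_space M using gaussian_field_prob_space[OF gf] .
  interpret PS: pair_sigma_finite M "lborel \<Otimes>\<^sub>M lborel :: (pt \<times> pt) measure"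
    by (intro pair_sigma_finite.intro P.sigma_finite_measure) (simp add: lborel_prod sigma_finite_lborel)
  define G where "G = (\<lambda>\<omega> (z :: pt \<times> pt). indicator (ball 0 s) (fst z) * \<phi> \<omega> (q + fst z) *
    (indicator (ball 0 s) (snd z) * \<phi> \<omega> (p + snd z)) :: real)"
  have G: "integrable (M \<Otimes>\<^sub>M (lborel \<Otimes>\<^sub>M lborel)) (case_prod G)"
    unfolding G_def by (rule gaussian_field_ball_product_integrable[OF gf sym diag])
  note T_measurable = gaussian_field_ball_integral_measurable[OF gf]
  have fibre: "AE \<omega> in M. (LINT z|(lborel \<Otimes>\<^sub>M lborel). G \<omega> z) = ball_integral s (\<phi> \<omega>) q * ball_integral s (\<phi> \<omega>) p"
    using PS.AE_integrable_fst'[OF G]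
  proof eventually_elim
    case (elim \<omega>)
    then have "(LINT z|(lborel \<Otimes>\<^sub>M lborel). G \<omega> z) = (LINT u|lborel. LINT v|lborel. G \<omega> (u, v))"
      by (intro lborel_pair.integral_fst'[symmetric]) simp
    then show ?case by (simp add: G_def ball_integral_def)
  qed
  have expectation: "(LINT \<omega>|M. G \<omega> z) = H z" for z
  proof -
    have "(LINT \<omega>|M. G \<omega> z) = indicator (ball 0 s) (fst z) * indicator (ball 0 s) (snd z) *
        (LINT \<omega>|M. \<phi> \<omega> (q + fst z) * \<phi> \<omega> (p + snd z))"
      by (simp add: G_def mult_ac)
    then show ?thesis using gaussian_field_covariance(4)[OF gf sym] by (simp add: H_def)
  qed
  have int_fibre: "integrable M (\<lambda>\<omega>. LINT z|(lborel \<Otimes>\<^sub>M lborel). G \<omega> z)"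
    using PS.integrable_fst'[OF G] by simp
  show "integrable M (\<lambda>\<omega>. ball_integral s (\<phi> \<omega>) q * ball_integral s (\<phi> \<omega>) p)"
    by (rule integrable_cong_AE_imp[OF int_fibre]) (use T_measurable fibre in auto)
  show "integrable (lborel \<Otimes>\<^sub>M lborel) H"
    using PS.integrable_snd[OF G] expectation by simp
  have "(LINT \<omega>|M. ball_integral s (\<phi> \<omega>) q * ball_integral s (\<phi> \<omega>) p) =
      (LINT \<omega>|M. LINT z|(lborel \<Otimes>\<^sub>M lborel). G \<omega> z)"
    by (rule integral_cong_AE)
      (use T_measurable fibre borel_measurable_integrable[OF int_fibre] in \<open>auto simp: eq_commute\<close>)
  also have "\<dots> = (LINT z|(lborel \<Otimes>\<^sub>M lborel). LINT \<omega>|M. G \<omega> z)"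
    using PS.integral_fst[OF G] PS.integral_snd[OF G] by simp
  also have "\<dots> = integral\<^sup>L (lborel \<Otimes>\<^sub>M lborel) H"
    using expectation by simp
  finally show "(LINT \<omega>|M. ball_integral s (\<phi> \<omega>) q * ball_integral s (\<phi> \<omega>) p) = integral\<^sup>L (lborel \<Otimes>\<^sub>M lborel) H" .
qed

lemma gaussian_field_ball_integral_dipole:
  fixes x x' y y' :: pt and s :: real
  assumes gf: "gaussian_field M \<phi> C" and sym: "\<And>x y. C y x = C x y" and diag: "\<And>x. C x x = K"
  defines "T \<equiv> \<lambda>r \<omega>. ball_integral s (\<phi> \<omega>) r"
  defines "H \<equiv> \<lambda>z :: pt \<times> pt. indicator (ball 0 s) (fst z) * indicator (ball 0 s) (snd z) *
    (C (x + fst z) (y + snd z) - C (x + fst z) (y' + snd z) - C (x' + fst z) (y + snd z) + C (x' + fst z) (y' + snd z))"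
  shows "integrable M (\<lambda>\<omega>. (T x \<omega> - T x' \<omega>) * (T y \<omega> - T y' \<omega>))"
    "integrable (lborel \<Otimes>\<^sub>M lborel) H"
    "(LINT \<omega>|M. (T x \<omega> - T x' \<omega>) * (T y \<omega> - T y' \<omega>)) = integral\<^sup>L (lborel \<Otimes>\<^sub>M lborel) H"
proof -
  define H' where "H' = (\<lambda>q p (z :: pt \<times> pt). indicator (ball 0 s) (fst z) * indicator (ball 0 s) (snd z) * C (q + fst z) (p + snd z) :: real)"
  have int_T: "integrable M (\<lambda>\<omega>. T q \<omega> * T p \<omega>)"
    and int_H': "integrable (lborel \<Otimes>\<^sub>M lborel) (H' q p)"
    and expectation: "(LINT \<omega>|M. T q \<omega> * T p \<omega>) = integral\<^sup>L (lborel \<Otimes>\<^sub>M lborel) (H' q p)" for q p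
    unfolding T_def H'_def by (rule gaussian_field_ball_integral_product[OF gf sym diag])+
  have expand: "(\<lambda>\<omega>. (T x \<omega> - T x' \<omega>) * (T y \<omega> - T y' \<omega>)) =
      (\<lambda>\<omega>. T x \<omega> * T y \<omega> - T x \<omega> * T y' \<omega> - T x' \<omega> * T y \<omega> + T x' \<omega> * T y' \<omega>)"
    by (auto simp: algebra_simps)
  have H_expand: "H = (\<lambda>z. H' x y z - H' x y' z - H' x' y z + H' x' y' z)"
    by (auto simp: H_def H'_def algebra_simps)
  show "integrable M (\<lambda>\<omega>. (T x \<omega> - T x' \<omega>) * (T y \<omega> - T y' \<omega>))"
    "integrable (lborel \<Otimes>\<^sub>M lborel) H"
    "(LINT \<omega>|M. (T x \<omega> - T x' \<omega>) * (T y \<omega> - T y' \<omega>)) = integral\<^sup>L (lborel \<Otimes>\<^sub>M lborel) H"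
    unfolding expand H_expand by (simp_all add: int_T int_H' expectation)
qed

lemma gaussian_field_ball_integral_dipole_neg:
  fixes x x' y y' :: pt and s :: real
  assumes gf: "gaussian_field M \<phi> C" and sym: "\<And>x y. C y x = C x y" and diag: "\<And>x. C x x = K"
    and s: "s > 0"
    and neg: "\<And>u v. u \<in> ball 0 s \<Longrightarrow> v \<in> ball 0 s \<Longrightarrow>
      C (x + u) (y + v) - C (x + u) (y' + v) - C (x' + u) (y + v) + C (x' + u) (y' + v) < 0"
  shows "(LINT \<omega>|M. (ball_integral s (\<phi> \<omega>) x - ball_integral s (\<phi> \<omega>) x') *
    (ball_integral s (\<phi> \<omega>) y - ball_integral s (\<phi> \<omega>) y')) < 0"
proof -
  define D where "D u v = C (x + u) (y + v) - C (x + u) (y' + v) - C (x' + u) (y + v) + C (x' + u) (y' + v)" for u v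
  define H where "H z = indicator (ball 0 s) (fst z) * indicator (ball 0 s) (snd z) * D (fst z) (snd z)"
    for z :: "pt \<times> pt"
  note dipole = gaussian_field_ball_integral_dipole[OF gf sym diag, where s = s and x = x and x' = x'
      and y = y and y' = y']
  have "integral\<^sup>L (lborel \<Otimes>\<^sub>M lborel) H < 0"
  proof (rule integral_neg_of_neg_on_nonnull[where A = "ball 0 s \<times> ball 0 s"])
    show "integrable (lborel \<Otimes>\<^sub>M lborel) H"
      using dipole(2) by (simp add: H_def[abs_def] D_def)
    show "H z \<le> 0" for z
      using neg[of "fst z" "snd z"] by (auto simp: H_def D_def indicator_def mem_Times_iff)
    show "H z < 0" if "z \<in> ball 0 s \<times> ball 0 s" for z
      using that neg[of "fst z" "snd z"] by (auto simp: H_def D_def mem_Times_iff)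
    show "emeasure (lborel \<Otimes>\<^sub>M lborel) (ball (0 :: pt) s \<times> ball (0 :: pt) s) \<noteq> 0"
      using emeasure_lborel_ball_nonzero[OF s, of "0 :: pt"]
      by (simp add: lborel.emeasure_pair_measure_Times)
  qed simp
  then show ?thesis
    using dipole(3) by (simp add: H_def[abs_def] D_def)
qed

section \<open>The covariance kernel\<close>

definition cov_density :: "real \<Rightarrow> pt \<Rightarrow> pt \<Rightarrow> real" where
  "cov_density \<Lambda> z \<xi> = indicator (cball 0 \<Lambda>) \<xi> * cos (\<xi> \<bullet> z) / ((norm \<xi>)\<^sup>2 + 1)"

lemma cov_kernel_eq_integral: "cov_kernel \<Lambda> x y = integral\<^sup>L lborel (cov_density \<Lambda> (x - y)) / (2 * pi) ^ 3"
  unfolding cov_kernel_def cov_density_def by simp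

lemma cov_kernel_sym: "cov_kernel \<Lambda> y x = cov_kernel \<Lambda> x y"
proof -
  have "cov_density \<Lambda> (y - x) = cov_density \<Lambda> (x - y)"
    by (rule ext) (metis cov_density_def cos_minus inner_minus_right minus_diff_eq)
  then show ?thesis by (simp add: cov_kernel_eq_integral)
qed

lemma cov_kernel_diag: "cov_kernel \<Lambda> x x = cov_kernel \<Lambda> 0 0"
  by (simp add: cov_kernel_eq_integral)

lemma integrable_cov_density: "integrable lborel (cov_density \<Lambda> z)"
proof (rule Bochner_Integration.integrable_bound)
  show "integrable lborel (indicator (cball (0::pt) \<Lambda>) :: pt \<Rightarrow> real)"
    using emeasure_lborel_cball_finite[of "0::pt" \<Lambda>] by (intro integrable_real_indicator) auto
  have [measurable]: "(\<lambda>\<xi>::pt. cos (\<xi> \<bullet> z) / ((norm \<xi>)\<^sup>2 + 1)) \<in> borel_measurable borel"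
    by (intro borel_measurable_continuous_onI continuous_intros) (simp add: add_nonneg_eq_0_iff)
  then show "cov_density \<Lambda> z \<in> borel_measurable lborel"
    unfolding measurable_lborel2 cov_density_def times_divide_eq_right[symmetric] by measurable
  have "\<bar>cos (\<xi> \<bullet> z)\<bar> / ((norm \<xi>)\<^sup>2 + 1) \<le> 1" for \<xi> :: pt
    using abs_cos_le_one[of "\<xi> \<bullet> z"] zero_le_power2[of "norm \<xi>"] unfolding divide_le_eq_1 by linarith
  then show "AE \<xi> in lborel. norm (cov_density \<Lambda> z \<xi>) \<le> norm (indicator (cball (0::pt) \<Lambda>) \<xi> :: real)"
    by (intro AE_I2) (auto simp: cov_density_def indicator_def abs_mult)
qed

abbreviation e1 :: pt where "e1 \<equiv> axis 1 1"

lemma cos_second_difference: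
  fixes x a b t :: real
  shows "cos (x - 2 * a * t) - 2 * cos (x - (a + b) * t) + cos (x - 2 * b * t)
    = 2 * cos (x - (a + b) * t) * (cos ((b - a) * t) - 1)"
proof -
  have "x - 2 * a * t = (x - (a + b) * t) + (b - a) * t" "x - 2 * b * t = (x - (a + b) * t) - (b - a) * t"
    by (simp_all add: algebra_simps)
  then show ?thesis by (simp only: cos_add cos_diff) (simp add: algebra_simps)
qed

lemma cov_density_second_difference:
  "cov_density \<Lambda> (w - (2 * a) *\<^sub>R e1) \<xi> - 2 * cov_density \<Lambda> (w - (a + b) *\<^sub>R e1) \<xi>
     + cov_density \<Lambda> (w - (2 * b) *\<^sub>R e1) \<xi>
   = 2 * cov_density \<Lambda> (w - (a + b) *\<^sub>R e1) \<xi> * (cos ((b - a) * \<xi> $ 1) - 1)"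
proof -
  have inner_e1: "\<xi> \<bullet> (w - k *\<^sub>R e1) = \<xi> \<bullet> w - k * \<xi> $ 1" for k
    by (simp add: inner_diff_right inner_axis)
  have "cov_density \<Lambda> (w - (2 * a) *\<^sub>R e1) \<xi> - 2 * cov_density \<Lambda> (w - (a + b) *\<^sub>R e1) \<xi>
      + cov_density \<Lambda> (w - (2 * b) *\<^sub>R e1) \<xi>
    = indicator (cball 0 \<Lambda>) \<xi> * (cos (\<xi> \<bullet> w - 2 * a * \<xi> $ 1) - 2 * cos (\<xi> \<bullet> w - (a + b) * \<xi> $ 1)
      + cos (\<xi> \<bullet> w - 2 * b * \<xi> $ 1)) / ((norm \<xi>)\<^sup>2 + 1)"
    unfolding cov_density_def inner_e1 by (simp add: add_divide_distrib diff_divide_distrib algebra_simps)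
  then show ?thesis
    unfolding cos_second_difference by (simp add: cov_density_def inner_e1)
qed

lemma cov_density_pos:
  assumes "norm \<xi> \<le> \<Lambda>" and "\<Lambda> * norm z < pi / 2"
  shows "0 < cov_density \<Lambda> z \<xi>"
proof -
  have "\<bar>\<xi> \<bullet> z\<bar> \<le> \<Lambda> * norm z"
    using Cauchy_Schwarz_ineq2[of \<xi> z] mult_right_mono[OF assms(1) norm_ge_zero[of z]] by linarith
  then have "0 < cos (\<xi> \<bullet> z)" using assms(2) by (intro cos_gt_zero_pi) auto
  moreover have "0 < (norm \<xi>)\<^sup>2 + 1" by (simp add: add_nonneg_pos)
  ultimately show ?thesis using assms(1) by (simp add: cov_density_def)
qed

lemma cov_density_nonneg: "\<Lambda> * norm z < pi / 2 \<Longrightarrow> 0 \<le> cov_density \<Lambda> z \<xi>"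
  using cov_density_pos[of \<xi> \<Lambda> z] by (cases "norm \<xi> \<le> \<Lambda>") (auto simp: cov_density_def)

lemma mem_ball_half_e1:
  assumes "\<xi> \<in> ball ((\<Lambda> / 2) *\<^sub>R e1) (\<Lambda> / 2)" and "\<Lambda> > 0"
  shows "norm \<xi> \<le> \<Lambda>" "0 < \<xi> $ 1" "\<xi> $ 1 < \<Lambda>"
proof -
  have "norm \<xi> \<le> norm ((\<Lambda> / 2) *\<^sub>R e1) + dist ((\<Lambda> / 2) *\<^sub>R e1) \<xi>"
    using norm_triangle_ineq[of "(\<Lambda> / 2) *\<^sub>R e1" "\<xi> - (\<Lambda> / 2) *\<^sub>R e1"] by (simp add: dist_norm norm_minus_commute)
  then show "norm \<xi> \<le> \<Lambda>" using assms by simp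
  have "\<bar>\<xi> $ 1 - \<Lambda> / 2\<bar> < \<Lambda> / 2"
    using assms(1) component_le_norm_cart[of "\<xi> - (\<Lambda> / 2) *\<^sub>R e1" 1] by (simp add: dist_norm norm_minus_commute)
  then show "0 < \<xi> $ 1" "\<xi> $ 1 < \<Lambda>" by arith+
qed

lemma cov_kernel_second_difference_neg:
  assumes "\<Lambda> > 0" "0 < a" "a < b" "\<Lambda> * (norm w + a + b) < pi / 2"
  shows "cov_kernel \<Lambda> w ((2 * a) *\<^sub>R e1) - 2 * cov_kernel \<Lambda> w ((a + b) *\<^sub>R e1)
    + cov_kernel \<Lambda> w ((2 * b) *\<^sub>R e1) < 0"
proof -
  define D where "D = (\<lambda>\<xi>. 2 * cov_density \<Lambda> (w - (a + b) *\<^sub>R e1) \<xi> * (cos ((b - a) * \<xi> $ 1) - 1))"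
  have D_eq: "D = (\<lambda>\<xi>. cov_density \<Lambda> (w - (2 * a) *\<^sub>R e1) \<xi> - 2 * cov_density \<Lambda> (w - (a + b) *\<^sub>R e1) \<xi>
     + cov_density \<Lambda> (w - (2 * b) *\<^sub>R e1) \<xi>)"
    unfolding D_def cov_density_second_difference ..
  have "\<Lambda> * norm (w - (a + b) *\<^sub>R e1) \<le> \<Lambda> * (norm w + a + b)"
    using assms(1-3) norm_triangle_ineq4[of w "(a + b) *\<^sub>R e1"] by (intro mult_left_mono) auto
  then have phase: "\<Lambda> * norm (w - (a + b) *\<^sub>R e1) < pi / 2" using assms(4) by linarith
  have "D \<xi> \<le> 0" for \<xi>
    using cov_density_nonneg[OF phase, of \<xi>] by (simp add: D_def mult_nonneg_nonpos)
  moreover have "D \<xi> < 0" if \<xi>: "\<xi> \<in> ball ((\<Lambda> / 2) *\<^sub>R e1) (\<Lambda> / 2)" for \<xi>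
  proof -
    note \<xi>1 = mem_ball_half_e1[OF \<xi> assms(1)]
    have "(b - a) * \<xi> $ 1 < (b - a) * \<Lambda>"
      using \<xi>1(3) assms(3) by (intro mult_strict_left_mono) auto
    also have "\<dots> \<le> \<Lambda> * (norm w + a + b)"
      using assms(1,2) by (subst mult.commute) (intro mult_left_mono; simp)
    finally have "(b - a) * \<xi> $ 1 < pi" using assms(4) pi_gt_zero by linarith
    moreover have "0 < (b - a) * \<xi> $ 1" using \<xi>1(2) assms(3) by simp
    ultimately have "cos ((b - a) * \<xi> $ 1) < cos 0" by (intro cos_monotone_0_pi) auto
    then show ?thesis
      using cov_density_pos[OF \<xi>1(1) phase] by (simp add: D_def mult_pos_neg)
  qed
  ultimately have "integral\<^sup>L lborel D < 0"
    using assms(1) integrable_cov_density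
    by (intro integral_neg_of_neg_on_nonnull[where A = "ball ((\<Lambda> / 2) *\<^sub>R e1) (\<Lambda> / 2)"])
      (auto simp: D_eq emeasure_lborel_ball_nonzero)
  moreover have "cov_kernel \<Lambda> w ((2 * a) *\<^sub>R e1) - 2 * cov_kernel \<Lambda> w ((a + b) *\<^sub>R e1)
    + cov_kernel \<Lambda> w ((2 * b) *\<^sub>R e1) = integral\<^sup>L lborel D / (2 * pi) ^ 3"
    unfolding cov_kernel_eq_integral D_eq by (simp add: integrable_cov_density add_divide_distrib diff_divide_distrib)
  ultimately show ?thesis by (simp add: divide_neg_pos)
qed

section \<open>Dipole test functions\<close>

lemma norm_Theta [simp]: "norm (Theta x) = norm x"
proof -
  have "(\<Sum>i\<in>UNIV. (norm (Theta x $ i))\<^sup>2) = (\<Sum>i\<in>UNIV. (norm (x $ i))\<^sup>2)"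
    by (intro sum.cong) (auto simp: Theta_def)
  then show ?thesis by (simp add: norm_vec_def L2_set_def)
qed

lemma dist_Theta: "dist p (Theta x) = dist (Theta p) x"
proof -
  have "p - Theta x = Theta (Theta p - x)" by (simp add: vec_eq_iff Theta_def)
  then show ?thesis by (simp add: dist_norm)
qed

lemma Theta_scaleR_e1: "Theta (k *\<^sub>R e1) = (- k) *\<^sub>R e1"
  by (simp add: vec_eq_iff Theta_def axis_def)

definition ball_dipole :: "pt \<Rightarrow> pt \<Rightarrow> real \<Rightarrow> pt \<Rightarrow> complex" where
  "ball_dipole p q s x = complex_of_real (indicator (ball p s) x - indicator (ball q s) x)"

lemma ball_dipole_comp_Theta: "ball_dipole p q s \<circ> Theta = ball_dipole (Theta p) (Theta q) s"
  by (rule ext) (simp add: ball_dipole_def indicator_def dist_Theta)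

lemma square_integrable_ball_dipole: "square_integrable (ball_dipole p q s)"
proof -
  have [measurable]: "ball_dipole p q s \<in> borel_measurable lborel"
    unfolding ball_dipole_def measurable_lborel2 by measurable
  have "integrable lborel (\<lambda>x. indicator (ball p s) x + indicator (ball q s) x :: real)"
    using emeasure_lborel_ball_finite[of p s] emeasure_lborel_ball_finite[of q s]
    by (intro Bochner_Integration.integrable_add integrable_real_indicator) auto
  then have "integrable lborel (\<lambda>x. (cmod (ball_dipole p q s x))\<^sup>2)"
    by (rule Bochner_Integration.integrable_bound)
      (auto simp: ball_dipole_def indicator_def intro!: AE_I2)
  then show ?thesis unfolding square_integrable_def by simp
qed

lemma closure_support_ball_dipole: "closure {x. ball_dipole p q s x \<noteq> 0} \<subseteq> cball p s \<union> cball q s"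
  by (rule closure_minimal) (auto simp: ball_dipole_def indicator_def)

lemma cball_e1_subset_right_half_space: "s < k \<Longrightarrow> cball (k *\<^sub>R e1) s \<subseteq> {x :: pt. x $ 1 > 0}"
proof
  fix x :: pt assume "s < k" "x \<in> cball (k *\<^sub>R e1) s"
  then have "\<bar>(x - k *\<^sub>R e1) $ 1\<bar> \<le> s" "s < k"
    using component_le_norm_cart[of "x - k *\<^sub>R e1" 1] by (auto simp: dist_norm norm_minus_commute)
  then show "x \<in> {x. x $ 1 > 0}" by auto
qed

lemma closure_support_ball_dipole_e1:
  "0 < s \<Longrightarrow> closure {x. ball_dipole ((2 * s) *\<^sub>R e1) ((4 * s) *\<^sub>R e1) s x \<noteq> 0} \<subseteq> {x. x $ 1 > 0}"
  using closure_support_ball_dipole cball_e1_subset_right_half_space[of s "2 * s"]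
    cball_e1_subset_right_half_space[of s "4 * s"]
  by fastforce

lemma integral_indicator_ball_eq_ball_integral:
  fixes g \<rho> :: "pt \<Rightarrow> real"
  assumes g: "continuous_on UNIV g" and \<rho>: "\<And>x. x \<in> ball p s \<Longrightarrow> \<rho> x = 1"
  shows "(LINT x|lborel. indicator (ball p s) x * (\<rho> x * g x)) = ball_integral s g p"
proof -
  have [measurable]: "g \<in> borel_measurable borel" using g by (rule borel_measurable_continuous_onI)
  have "(LINT x|lborel. indicator (ball p s) x * (\<rho> x * g x)) = (LINT x|lborel. indicator (ball p s) x * g x)"
    by (intro Bochner_Integration.integral_cong) (auto simp: indicator_def \<rho>)
  also have "\<dots> = (LINT x|distr lborel borel ((+) p). indicator (ball p s) x * g x)"
    by (simp add: lborel_distr_plus)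
  also have "\<dots> = (LINT u|lborel. indicator (ball p s) (p + u) * g (p + u))"
    by (rule integral_distr) auto
  also have "\<dots> = ball_integral s g p"
    unfolding ball_integral_def by (intro Bochner_Integration.integral_cong) (auto simp: indicator_def dist_norm)
  finally show ?thesis .
qed

lemma smeared_ball_dipole:
  assumes \<rho>: "continuous_on UNIV \<rho>" and \<phi>: "continuous_on UNIV (\<phi> \<omega>)"
    and \<rho>1: "\<And>x. x \<in> ball p s \<union> ball q s \<Longrightarrow> \<rho> x = 1"
  shows "smeared \<rho> \<phi> (ball_dipole p q s) \<omega> =
    complex_of_real (ball_integral s (\<phi> \<omega>) p - ball_integral s (\<phi> \<omega>) q)"
proof -
  have g: "continuous_on UNIV (\<lambda>x. \<rho> x * \<phi> \<omega> x)" using \<rho> \<phi> by (rule continuous_on_mult)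
  have "smeared \<rho> \<phi> (ball_dipole p q s) \<omega> = complex_of_real (LINT x|lborel.
      indicator (ball p s) x * (\<rho> x * \<phi> \<omega> x) - indicator (ball q s) x * (\<rho> x * \<phi> \<omega> x))"
    unfolding smeared_def ball_dipole_def integral_complex_of_real[symmetric]
    by (simp add: algebra_simps)
  also have "\<dots> = complex_of_real (ball_integral s (\<phi> \<omega>) p - ball_integral s (\<phi> \<omega>) q)"
    using integrable_indicator_ball_times_continuous[OF g] \<rho>1
      integral_indicator_ball_eq_ball_integral[OF \<phi>, of p s \<rho>]
      integral_indicator_ball_eq_ball_integral[OF \<phi>, of q s \<rho>]
    by simp
  finally show ?thesis .
qed

definition reflected_dipole_product :: "real \<Rightarrow> (pt \<Rightarrow> real) \<Rightarrow> real" where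
  "reflected_dipole_product s g =
    (ball_integral s g ((- (2 * s)) *\<^sub>R e1) - ball_integral s g ((- (4 * s)) *\<^sub>R e1)) *
    (ball_integral s g ((2 * s) *\<^sub>R e1) - ball_integral s g ((4 * s) *\<^sub>R e1))"

lemma gaussian_field_reflected_dipole_correlation_neg:
  fixes s \<Lambda> :: real
  assumes gf: "gaussian_field M \<phi> (cov_kernel \<Lambda>)" and \<Lambda>: "\<Lambda> > 0" and s: "s > 0" "8 * s * \<Lambda> \<le> 1"
  shows "integrable M (\<lambda>\<omega>. reflected_dipole_product s (\<phi> \<omega>))"
    "(LINT \<omega>|M. reflected_dipole_product s (\<phi> \<omega>)) < 0"
proof -
  let ?C = "cov_kernel \<Lambda>"
  show "integrable M (\<lambda>\<omega>. reflected_dipole_product s (\<phi> \<omega>))"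
    unfolding reflected_dipole_product_def
    by (rule gaussian_field_ball_integral_dipole(1)[OF gf cov_kernel_sym cov_kernel_diag])
  have shift: "?C ((- k) *\<^sub>R e1 + u) (m *\<^sub>R e1 + v) = ?C (u - v) ((k + m) *\<^sub>R e1)" for k m and u v :: pt
    unfolding cov_kernel_eq_integral by (simp add: algebra_simps scaleR_left_distrib)
  show "(LINT \<omega>|M. reflected_dipole_product s (\<phi> \<omega>)) < 0"
    unfolding reflected_dipole_product_def
  proof (rule gaussian_field_ball_integral_dipole_neg[OF gf cov_kernel_sym cov_kernel_diag s(1)])
    fix u v :: pt assume "u \<in> ball 0 s" "v \<in> ball 0 s"
    then have "norm (u - v) < 2 * s" using norm_triangle_ineq4[of u v] by simp
    then have "\<Lambda> * (norm (u - v) + 2 * s + 4 * s) < \<Lambda> * (8 * s)"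
      using \<Lambda> by (intro mult_strict_left_mono) auto
    also have "\<dots> \<le> 1" using s(2) by (simp add: mult_ac)
    finally have "\<Lambda> * (norm (u - v) + 2 * s + 4 * s) < pi / 2" using pi_gt3 by linarith
    from cov_kernel_second_difference_neg[OF \<Lambda> _ _ this] s(1)
    show "?C ((- (2 * s)) *\<^sub>R e1 + u) ((2 * s) *\<^sub>R e1 + v) - ?C ((- (2 * s)) *\<^sub>R e1 + u) ((4 * s) *\<^sub>R e1 + v)
      - ?C ((- (4 * s)) *\<^sub>R e1 + u) ((2 * s) *\<^sub>R e1 + v) + ?C ((- (4 * s)) *\<^sub>R e1 + u) ((4 * s) *\<^sub>R e1 + v) < 0"
      unfolding shift by (simp add: algebra_simps)
  qed
qed

lemma smeared_reflected_ball_dipole: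
  assumes gf: "gaussian_field M \<phi> C" and \<omega>: "\<omega> \<in> space M" and \<rho>: "continuous_on UNIV \<rho>"
    and \<rho>1: "\<forall>x\<in>ball 0 R. \<rho> x = 1" and s: "0 < s" "5 * s \<le> R"
  defines "f \<equiv> ball_dipole ((2 * s) *\<^sub>R e1) ((4 * s) *\<^sub>R e1) s"
  shows "cnj (smeared \<rho> \<phi> (f \<circ> Theta) \<omega>) * smeared \<rho> \<phi> f \<omega>
    = complex_of_real (reflected_dipole_product s (\<phi> \<omega>))"
proof -
  have \<rho>1_near: "\<rho> x = 1" if "x \<in> ball (k *\<^sub>R e1) s" "\<bar>k\<bar> \<le> 4 * s" for k x
  proof -
    have "norm x \<le> \<bar>k\<bar> + dist (k *\<^sub>R e1) x"
      using norm_triangle_ineq[of "k *\<^sub>R e1" "x - k *\<^sub>R e1"] by (simp add: dist_norm norm_minus_commute)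
    then show ?thesis using that s \<rho>1 by simp
  qed
  have smeared: "smeared \<rho> \<phi> (ball_dipole (k *\<^sub>R e1) (m *\<^sub>R e1) s) \<omega> =
      complex_of_real (ball_integral s (\<phi> \<omega>) (k *\<^sub>R e1) - ball_integral s (\<phi> \<omega>) (m *\<^sub>R e1))"
    if "\<bar>k\<bar> \<le> 4 * s" "\<bar>m\<bar> \<le> 4 * s" for k m
  proof (rule smeared_ball_dipole[where \<phi> = \<phi> and \<omega> = \<omega>, OF \<rho> gaussian_field_continuous[OF gf \<omega>]])
    fix x assume "x \<in> ball (k *\<^sub>R e1) s \<union> ball (m *\<^sub>R e1) s"
    then show "\<rho> x = 1" using \<rho>1_near[of x k] \<rho>1_near[of x m] that by auto
  qed
  show ?thesis
    unfolding f_def ball_dipole_comp_Theta Theta_scaleR_e1 reflected_dipole_product_def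
    using s(1) smeared[of "- (2 * s)" "- (4 * s)"] smeared[of "2 * s" "4 * s"] by simp
qed

section \<open>The interacting measure\<close>

lemma smooth_fun_continuous: "smooth_fun \<rho> \<Longrightarrow> continuous_on UNIV \<rho>"
  unfolding smooth_fun_def
  by (metis pderivs.simps(1) continuous_at_imp_continuous_on differentiable_imp_continuous_within)

lemma quartic_integral_lower_bound:
  fixes g :: "pt \<Rightarrow> real" and a :: real
  assumes g: "continuous_on UNIV g" and S: "compact S" and zero: "\<And>x. x \<notin> S \<Longrightarrow> g x = 0"
  shows "- (a\<^sup>2 / 4 * measure lborel S) \<le> (LINT x|lborel. (g x) ^ 4) + a * (LINT x|lborel. (g x) ^ 2)"
proof -
  have power_int: "integrable lborel (\<lambda>x. (g x) ^ k)" if "k > 0" for k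
  proof -
    have "integrable lborel (\<lambda>x. indicator S x *\<^sub>R (g x) ^ k)"
      using S by (rule borel_integrable_compact) (intro continuous_on_subset[OF continuous_on_power[OF g]], simp)
    moreover have "(\<lambda>x. indicator S x *\<^sub>R (g x) ^ k) = (\<lambda>x. (g x) ^ k)"
      using zero that by (auto simp: indicator_def fun_eq_iff)
    ultimately show ?thesis by simp
  qed
  have S_finite: "emeasure lborel S < \<infinity>" using S by (intro emeasure_bounded_finite compact_imp_bounded)
  have [measurable]: "S \<in> sets borel" using S by (simp add: compact_imp_closed)
  have "(LINT x|lborel. indicator S x * (- a\<^sup>2 / 4)) \<le> (LINT x|lborel. (g x) ^ 4 + a * (g x) ^ 2)"
  proof (rule integral_mono)
    show "integrable lborel (\<lambda>x. indicator S x * (- a\<^sup>2 / 4) :: real)"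
      using S_finite by (intro integrable_mult_left integrable_real_indicator) auto
    show "integrable lborel (\<lambda>x. (g x) ^ 4 + a * (g x) ^ 2)" using power_int by auto
    fix x
    have "- a\<^sup>2 / 4 \<le> (g x) ^ 4 + a * (g x) ^ 2"
      using zero_le_power2[of "(g x)\<^sup>2 + a / 2"] by (simp add: power2_eq_square power4_eq_xxxx algebra_simps)
    then show "indicator S x * (- a\<^sup>2 / 4) \<le> (g x) ^ 4 + a * (g x) ^ 2"
      using zero[of x] by (cases "x \<in> S") auto
  qed
  moreover have "(LINT x|lborel. indicator S x * (- a\<^sup>2 / 4)) = - (a\<^sup>2 / 4 * measure lborel S)"
    using S_finite by (simp add: less_top[symmetric])
  ultimately show ?thesis using power_int[of 4] power_int[of 2] by (simp add: mult_ac)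
qed

lemma weight_measurable:
  assumes gf: "gaussian_field M \<phi> C" and \<rho>[measurable]: "\<rho> \<in> borel_measurable borel"
  shows "weight c a \<rho> \<phi> \<in> borel_measurable M"
proof -
  have [measurable]: "(\<lambda>w. \<phi> (fst w) (snd w)) \<in> borel_measurable (M \<Otimes>\<^sub>M borel)"
    by (rule gaussian_field_measurable_comp[OF gf]) auto
  have "(\<lambda>w. (\<rho> (snd w) * \<phi> (fst w) (snd w)) ^ k) \<in> borel_measurable (M \<Otimes>\<^sub>M borel)" for k
    by measurable
  then have "(\<lambda>(\<omega>, x). (\<rho> x * \<phi> \<omega> x) ^ k) \<in> borel_measurable (M \<Otimes>\<^sub>M lborel)" for k
    by (subst measurable_cong_sets[OF sets_pair_measure_cong refl]) (auto simp: split_beta')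
  then have [measurable]: "(\<lambda>\<omega>. LINT x|lborel. (\<rho> x * \<phi> \<omega> x) ^ k) \<in> borel_measurable M" for k
    by (rule lborel.borel_measurable_lebesgue_integral)
  show ?thesis unfolding weight_def[abs_def] by measurable
qed

lemma weight_le:
  assumes gf: "gaussian_field M \<phi> C" and \<omega>: "\<omega> \<in> space M" and "c \<ge> 0"
    and \<rho>: "continuous_on UNIV \<rho>" and "compact_support \<rho>"
  shows "weight c a \<rho> \<phi> \<omega> \<le> exp (c * (a\<^sup>2 / 4 * measure lborel (closure {x. \<rho> x \<noteq> 0})))"
proof -
  have "- (a\<^sup>2 / 4 * measure lborel (closure {x. \<rho> x \<noteq> 0}))
      \<le> (LINT x|lborel. (\<rho> x * \<phi> \<omega> x) ^ 4) + a * (LINT x|lborel. (\<rho> x * \<phi> \<omega> x) ^ 2)"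
    using assms(5) closure_subset[of "{x. \<rho> x \<noteq> 0}"]
    by (intro quartic_integral_lower_bound continuous_on_mult \<rho> gaussian_field_continuous[OF gf \<omega>])
      (auto simp: compact_support_def)
  from mult_left_mono[OF this \<open>c \<ge> 0\<close>] show ?thesis
    unfolding weight_def by (simp add: algebra_simps)
qed

lemma integral_weight_pos:
  assumes gf: "gaussian_field M \<phi> C" and "c \<ge> 0" and \<rho>: "continuous_on UNIV \<rho>" and "compact_support \<rho>"
  shows "0 < (LINT \<omega>|M. weight c a \<rho> \<phi> \<omega>)"
proof -
  interpret prob_space M using gaussian_field_prob_space[OF gf] .
  have [measurable]: "weight c a \<rho> \<phi> \<in> borel_measurable M"
    using weight_measurable[OF gf borel_measurable_continuous_onI[OF \<rho>]] .
  have int: "integrable M (weight c a \<rho> \<phi>)"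
    using weight_le[OF gf _ assms(2-4)]
    by (intro integrable_const_bound[where B = "exp (c * (a\<^sup>2 / 4 * measure lborel (closure {x. \<rho> x \<noteq> 0})))"])
      (auto simp: weight_def)
  have "AE \<omega> in M. 0 < weight c a \<rho> \<phi> \<omega>" by (simp add: weight_def)
  then show ?thesis
    using integral_less_AE_space[OF integrable_const[of 0] int] emeasure_space_1 by simp
qed

lemma integral_nu_of_real:
  assumes gf: "gaussian_field M \<phi> C" and \<rho>: "continuous_on UNIV \<rho>"
    and X: "X \<in> borel_measurable M" and hX: "\<And>\<omega>. \<omega> \<in> space M \<Longrightarrow> h \<omega> = complex_of_real (X \<omega>)"
  shows "(LINT \<omega>|nu M c a \<rho> \<phi>. h \<omega>) =
    complex_of_real ((LINT \<omega>|M. weight c a \<rho> \<phi> \<omega> * X \<omega>) / (LINT \<omega>|M. weight c a \<rho> \<phi> \<omega>))"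
proof -
  have W: "weight c a \<rho> \<phi> \<in> borel_measurable M"
    using weight_measurable[OF gf borel_measurable_continuous_onI[OF \<rho>]] .
  have h: "h \<in> borel_measurable M"
    using X hX by (subst measurable_cong[where g = "\<lambda>\<omega>. complex_of_real (X \<omega>)"]) auto
  have "(LINT \<omega>|nu M c a \<rho> \<phi>. h \<omega>) =
      (LINT \<omega>|M. weight c a \<rho> \<phi> \<omega> *\<^sub>R h \<omega>) /\<^sub>R (LINT \<omega>|M. weight c a \<rho> \<phi> \<omega>)"
    unfolding nu_def by (rule integral_normalized_density[OF W h]) (simp add: weight_def)
  also have "(LINT \<omega>|M. weight c a \<rho> \<phi> \<omega> *\<^sub>R h \<omega>) = (LINT \<omega>|M. complex_of_real (weight c a \<rho> \<phi> \<omega> * X \<omega>))"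
    by (intro Bochner_Integration.integral_cong) (auto simp: hX scaleR_conv_of_real)
  also have "\<dots> = complex_of_real (LINT \<omega>|M. weight c a \<rho> \<phi> \<omega> * X \<omega>)"
    by (rule integral_complex_of_real)
  finally show ?thesis by (simp add: scaleR_conv_of_real divide_inverse_commute)
qed

lemma tendsto_integral_weight_mult:
  assumes gf: "gaussian_field M \<phi> C" and \<rho>: "continuous_on UNIV \<rho>" and "compact_support \<rho>"
    and X: "integrable M X"
  shows "((\<lambda>c. LINT \<omega>|M. weight c a \<rho> \<phi> \<omega> * X \<omega>) \<longlongrightarrow> integral\<^sup>L M X) (at_right 0)"
proof (rule tendsto_integral_weighted_at_right_0[OF X])
  define B where "B = a\<^sup>2 / 4 * measure lborel (closure {x. \<rho> x \<noteq> 0})"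
  show "weight c a \<rho> \<phi> \<in> borel_measurable M" for c
    using weight_measurable[OF gf borel_measurable_continuous_onI[OF \<rho>]] .
  show "\<bar>weight c a \<rho> \<phi> \<omega>\<bar> \<le> exp B" if "0 < c" "c \<le> 1" "\<omega> \<in> space M" for c \<omega>
  proof -
    have "weight c a \<rho> \<phi> \<omega> \<le> exp (c * B)"
      unfolding B_def using that by (intro weight_le[OF gf _ _ \<rho> assms(3)]) auto
    also have "\<dots> \<le> exp B"
      using that by (simp add: B_def mult_left_le_one_le)
    finally show ?thesis by (simp add: weight_def)
  qed
  show "((\<lambda>c. weight c a \<rho> \<phi> \<omega>) \<longlongrightarrow> 1) (at_right 0)" for \<omega>
  proof -
    have "((\<lambda>c. weight c a \<rho> \<phi> \<omega>) \<longlongrightarrow> exp (- 0 * (LINT x|lborel. (\<rho> x * \<phi> \<omega> x) ^ 4)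
        - 0 * a * (LINT x|lborel. (\<rho> x * \<phi> \<omega> x) ^ 2))) (at_right 0)"
      unfolding weight_def by (intro tendsto_intros)
    then show ?thesis by simp
  qed
qed

theorem theorem5p2:
  fixes \<Lambda> a R :: real and \<rho> :: "pt \<Rightarrow> real"
    and M :: "'w measure" and \<phi> :: "'w \<Rightarrow> pt \<Rightarrow> real"
  assumes "\<Lambda> > 0"
    and "smooth_fun \<rho>" and "compact_support \<rho>"
    and "R > 0" and "\<forall>x\<in>ball 0 R. \<rho> x = 1"
    and "gaussian_field M \<phi> (cov_kernel \<Lambda>)"
  shows "\<exists>c0 > 0. \<forall>c. 0 < c \<and> c < c0 \<longrightarrow>
           (\<exists>f. square_integrable f \<and> closure {x. f x \<noteq> 0} \<subseteq> {x. x $ 1 > 0} \<and>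
              (let E = (LINT \<omega>|nu M c a \<rho> \<phi>.
                          cnj (smeared \<rho> \<phi> (f \<circ> Theta) \<omega>) * smeared \<rho> \<phi> f \<omega>)
               in Im E = 0 \<and> Re E < 0))"
proof -
  note gf = assms(6)
  have \<rho>: "continuous_on UNIV \<rho>" using assms(2) by (rule smooth_fun_continuous)
  define s where "s = min (R / 8) (1 / (8 * \<Lambda>))"
  have s: "s > 0" "8 * s * \<Lambda> \<le> 1" "5 * s \<le> R"
    using assms(1,4) by (auto simp: s_def min_def field_simps)
  define f where "f = ball_dipole ((2 * s) *\<^sub>R e1) ((4 * s) *\<^sub>R e1) s"
  define X where "X = (\<lambda>\<omega>. reflected_dipole_product s (\<phi> \<omega>))"
  note X = gaussian_field_reflected_dipole_correlation_neg[OF gf assms(1) s(1,2), folded X_def]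
  have "\<forall>\<^sub>F c in at_right 0. (LINT \<omega>|M. weight c a \<rho> \<phi> \<omega> * X \<omega>) < 0"
    using tendsto_integral_weight_mult[OF gf \<rho> assms(3) X(1)] X(2) by (rule order_tendstoD)
  then obtain c0 where "c0 > 0"
    and c0: "\<And>c. 0 < c \<Longrightarrow> c < c0 \<Longrightarrow> (LINT \<omega>|M. weight c a \<rho> \<phi> \<omega> * X \<omega>) < 0"
    unfolding eventually_at_right_field by auto
  have support: "closure {x. f x \<noteq> 0} \<subseteq> {x. x $ 1 > 0}"
    unfolding f_def using s(1) by (rule closure_support_ball_dipole_e1)
  have correlation: "cnj (smeared \<rho> \<phi> (f \<circ> Theta) \<omega>) * smeared \<rho> \<phi> f \<omega> = complex_of_real (X \<omega>)"
    if "\<omega> \<in> space M" for \<omega>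
    unfolding f_def X_def by (rule smeared_reflected_ball_dipole[OF gf that \<rho> assms(5) s(1,3)])
  show ?thesis
  proof (intro exI[of _ c0] conjI allI impI \<open>c0 > 0\<close> exI[of _ f] support)
    show "square_integrable f" unfolding f_def by (rule square_integrable_ball_dipole)
    fix c assume c: "0 < c \<and> c < c0"
    show "let E = LINT \<omega>|nu M c a \<rho> \<phi>. cnj (smeared \<rho> \<phi> (f \<circ> Theta) \<omega>) * smeared \<rho> \<phi> f \<omega>
      in Im E = 0 \<and> Re E < 0"
      using integral_nu_of_real[OF gf \<rho> borel_measurable_integrable[OF X(1)] correlation]
        c0[of c] integral_weight_pos[OF gf _ \<rho> assms(3), of c a] c
      by (simp add: divide_neg_pos)
  qed
qed

end
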